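(* Let $(\Sigma,E)$ be an algebraic theory and $(\Sigma^{\mathrm{s}},E^{\mathrm{s}})$ the associated theory. For all $\Sigma$-terms $t(v_1,\dots,v_n),s(v_1,\dots,v_n)$ over $\mathrm{Var}$: if $E\vdash t(v_1,\dots,v_n)=s(v_1,\dots,v_n)$, then $E^{\mathrm{s}}\vdash t(\mathsf{a}v_1,\dots,\mathsf{a}v_n)=s(\mathsf{a}v_1,\dots,\mathsf{a}v_n)$.
   Context: $\mathrm{Var}=\{v_1,v_2,\dots\}$ is a fixed set of variables; $E\vdash s=t$ means the equation is derivable from $E$ in equational logic (axioms, reflexivity, symmetry, transitivity, congruence, substitution). Given $(\Sigma,E)$, the theory $(\Sigma^{\mathrm{s}},E^{\mathrm{s}})$ has signature $\Sigma^{\mathrm{s}}=\Sigma\uplus\{\mathsf{a}:1\}$ and equations $E^{\mathrm{s}}$ consisting of: $\mathsf{a}\mathsf{a}v_1=\mathsf{a}v_1$; $\mathsf{a}(\mathsf{op}(v_1,\dots,v_n))=\mathsf{op}(v_1,\dots,v_n)$ and $\mathsf{op}(\mathsf{a}v_1,\dots,\mathsf{a}v_n)=\mathsf{op}(v_1,\dots,v_n)$ for every $(\mathsf{op}:n)\in\Sigma$; and $t(\mathsf{a}v_1,\dots,\mathsf{a}v_n)=s(\mathsf{a}v_1,\dots,\mathsf{a}v_n)$ for every equation $t(v_1,\dots,v_n)=s(v_1,\dots,v_n)$ in $E$. *)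

theory Defs
  imports Main
begin

text \<open>Terms over function symbols of type 'f and variables Var = {v_1, v_2, ...},
  where variable v_(i+1) is represented by V i.\<close>
datatype 'f trm = V nat | Fn 'f "'f trm list"

text \<open>A signature is an arity function; every element of the type 'f is a symbol.\<close>
fun wf_trm :: "('f \<Rightarrow> nat) \<Rightarrow> 'f trm \<Rightarrow> bool" where
  "wf_trm ar (V x) = True"
| "wf_trm ar (Fn f ts) = (length ts = ar f \<and> (\<forall>t\<in>set ts. wf_trm ar t))"

fun subst :: "(nat \<Rightarrow> 'f trm) \<Rightarrow> 'f trm \<Rightarrow> 'f trm" where
  "subst \<sigma> (V x) = \<sigma> x"
| "subst \<sigma> (Fn f ts) = Fn f (map (subst \<sigma>) ts)"

inductive derivable :: "('f \<Rightarrow> nat) \<Rightarrow> ('f trm \<times> 'f trm) set \<Rightarrow> 'f trm \<Rightarrow> 'f trm \<Rightarrow> bool"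
  for ar E where
  ax: "(s, t) \<in> E \<Longrightarrow> derivable ar E s t"
| refl: "wf_trm ar t \<Longrightarrow> derivable ar E t t"
| sym: "derivable ar E s t \<Longrightarrow> derivable ar E t s"
| trans: "derivable ar E s t \<Longrightarrow> derivable ar E t u \<Longrightarrow> derivable ar E s u"
| cong: "length ss = ar f \<Longrightarrow> list_all2 (derivable ar E) ss ts \<Longrightarrow>
           derivable ar E (Fn f ss) (Fn f ts)"
| inst: "derivable ar E s t \<Longrightarrow> (\<forall>x. wf_trm ar (\<sigma> x)) \<Longrightarrow>
           derivable ar E (subst \<sigma> s) (subst \<sigma> t)"

datatype 'f ext = Old 'f | Asym

fun ar_s :: "('f \<Rightarrow> nat) \<Rightarrow> 'f ext \<Rightarrow> nat" where
  "ar_s ar (Old f) = ar f"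
| "ar_s ar Asym = 1"

definition lift :: "'f trm \<Rightarrow> 'f ext trm" where
  "lift t = map_trm Old t"

definition aV :: "nat \<Rightarrow> 'f ext trm" where
  "aV i = Fn Asym [V i]"

definition a_inst :: "'f trm \<Rightarrow> 'f ext trm" where
  "a_inst t = subst aV (lift t)"

definition E_s :: "('f \<Rightarrow> nat) \<Rightarrow> ('f trm \<times> 'f trm) set \<Rightarrow> ('f ext trm \<times> 'f ext trm) set" where
  "E_s ar E =
     {(Fn Asym [Fn Asym [V 0]], Fn Asym [V 0])}
   \<union> {(Fn Asym [Fn (Old f) (map V [0..<ar f])], Fn (Old f) (map V [0..<ar f])) | f. True}
   \<union> {(Fn (Old f) (map aV [0..<ar f]), Fn (Old f) (map V [0..<ar f])) | f. True}
   \<union> {(a_inst t, a_inst s) | t s. (t, s) \<in> E}"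

end

theory Submission
  imports Defs
begin

text \<open>Axioms of E become axioms
  of E^s, and reflexivity, symmetry, transitivity and congruence commute with
  t \<mapsto> t(a v1, ..., a vn). The substitution rule is the only real case: instantiating
  t(a v1, ..., a vn) by vi \<mapsto> \<sigma>i(a v1, ..., a vn) puts an extra a on top of every
  \<sigma>i(a v1, ..., a vn), and this a is absorbed, by a a v = a v when \<sigma>i is a variable and
  by a(op(...)) = op(...) otherwise.\<close>

lemma wf_trm_subst:
  "wf_trm ar t \<Longrightarrow> (\<forall>x. wf_trm ar (\<sigma> x)) \<Longrightarrow> wf_trm ar (subst \<sigma> t)"
  by (induction t) auto

lemma derivable_wf_trm:
  assumes "\<forall>(l, r)\<in>E. wf_trm ar l \<and> wf_trm ar r"
  shows "derivable ar E s t \<Longrightarrow> wf_trm ar s \<and> wf_trm ar t"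
proof (induction rule: derivable.induct)
  case (cong ss f ts)
  then show ?case by (auto simp: list_all2_conv_all_nth in_set_conv_nth)
qed (use assms in \<open>auto simp: wf_trm_subst\<close>)

lemma derivable_axiom_instance:
  "(l, r) \<in> E \<Longrightarrow> (\<forall>x. wf_trm ar (\<sigma> x)) \<Longrightarrow> derivable ar E (subst \<sigma> l) (subst \<sigma> r)"
  by (rule derivable.inst[OF derivable.ax])

lemma derivable_subst_cong:
  assumes "\<And>x. derivable ar E (\<rho>\<^sub>1 x) (\<rho>\<^sub>2 x)"
  shows "wf_trm ar t \<Longrightarrow> derivable ar E (subst \<rho>\<^sub>1 t) (subst \<rho>\<^sub>2 t)"
proof (induction t)
  case (V x)
  then show ?case using assms by simp
next
  case (Fn f ts)
  have "list_all2 (derivable ar E) (map (subst \<rho>\<^sub>1) ts) (map (subst \<rho>\<^sub>2) ts)"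
    using Fn by (simp add: list_all2_conv_all_nth)
  then show ?case
    using Fn.prems by (simp add: derivable.cong)
qed

lemma subst_Fn_map_V_upt:
  assumes "\<forall>j<length us. \<sigma> j = us ! j"
  shows "subst \<sigma> (Fn f (map V [0..<length us])) = Fn f us"
proof -
  have "map \<sigma> [0..<length us] = map ((!) us) [0..<length us]"
    using assms by (intro map_cong) auto
  then show ?thesis
    by (simp add: map_nth comp_def)
qed

lemma lift_V [simp]: "lift (V i) = V i"
  by (simp add: lift_def)

lemma lift_Fn [simp]: "lift (Fn f ts) = Fn (Old f) (map lift ts)"
  by (simp add: lift_def)

lemma a_inst_V [simp]: "a_inst (V i) = aV i"
  by (simp add: a_inst_def)

lemma a_inst_Fn [simp]: "a_inst (Fn f ts) = Fn (Old f) (map a_inst ts)"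
  by (simp add: a_inst_def)

lemma wf_trm_lift: "wf_trm ar t \<Longrightarrow> wf_trm (ar_s ar) (lift t)"
  by (induction t) auto

lemma wf_trm_a_inst: "wf_trm ar t \<Longrightarrow> wf_trm (ar_s ar) (a_inst t)"
  by (induction t) (auto simp: aV_def)

lemma a_inst_subst: "a_inst (subst \<sigma> t) = subst (a_inst \<circ> \<sigma>) (lift t)"
  by (induction t) auto

lemma subst_a_inst: "subst \<rho> (a_inst t) = subst (\<lambda>i. Fn Asym [\<rho> i]) (lift t)"
  by (induction t) (auto simp: aV_def)

lemma derivable_Asym_a_inst:
  assumes "wf_trm ar u"
  shows "derivable (ar_s ar) (E_s ar E) (Fn Asym [a_inst u]) (a_inst u)"
proof (cases u)
  case (V i)
  have "(Fn Asym [Fn Asym [V 0]], Fn Asym [V 0]) \<in> E_s ar E"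
    by (simp add: E_s_def)
  from derivable_axiom_instance[OF this, where \<sigma> = "\<lambda>_. V i"]
  show ?thesis using V by (simp add: aV_def)
next
  case (Fn f us)
  define \<sigma> where "\<sigma> j = (if j < length us then a_inst (us ! j) else V 0)" for j
  have len: "length us = ar f" and wf_us: "\<forall>u\<in>set us. wf_trm ar u"
    using assms Fn by auto
  have "(Fn Asym [Fn (Old f) (map V [0..<ar f])], Fn (Old f) (map V [0..<ar f])) \<in> E_s ar E"
    unfolding E_s_def by blast
  moreover have "\<forall>x. wf_trm (ar_s ar) (\<sigma> x)"
    using wf_us by (auto simp: \<sigma>_def wf_trm_a_inst)
  ultimately have "derivable (ar_s ar) (E_s ar E)
      (subst \<sigma> (Fn Asym [Fn (Old f) (map V [0..<length us])]))
      (subst \<sigma> (Fn (Old f) (map V [0..<length us])))"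
    unfolding len by (rule derivable_axiom_instance)
  moreover have "\<forall>j<length (map a_inst us). \<sigma> j = map a_inst us ! j"
    by (simp add: \<sigma>_def)
  ultimately show ?thesis
    using Fn subst_Fn_map_V_upt[of "map a_inst us" \<sigma>] by simp
qed

lemma derivable_a_inst_subst:
  assumes "derivable (ar_s ar) (E_s ar E) (a_inst s) (a_inst t)"
    and "wf_trm ar s" "wf_trm ar t" "\<forall>x. wf_trm ar (\<sigma> x)"
  shows "derivable (ar_s ar) (E_s ar E) (a_inst (subst \<sigma> s)) (a_inst (subst \<sigma> t))"
proof -
  let ?D = "derivable (ar_s ar) (E_s ar E)" and ?\<tau> = "a_inst \<circ> \<sigma>"
  have absorb: "?D (subst (\<lambda>i. Fn Asym [?\<tau> i]) (lift u)) (subst ?\<tau> (lift u))"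
    if "wf_trm ar u" for u
    using assms(4) by (intro derivable_subst_cong wf_trm_lift that) (simp add: derivable_Asym_a_inst)
  have "?D (subst ?\<tau> (a_inst s)) (subst ?\<tau> (a_inst t))"
    using assms(1,4) by (intro derivable.inst) (simp_all add: wf_trm_a_inst)
  then have "?D (subst (\<lambda>i. Fn Asym [?\<tau> i]) (lift s)) (subst (\<lambda>i. Fn Asym [?\<tau> i]) (lift t))"
    by (simp only: subst_a_inst)
  then have "?D (subst ?\<tau> (lift s)) (subst ?\<tau> (lift t))"
    using absorb[OF assms(2)] absorb[OF assms(3)] by (blast intro: derivable.sym derivable.trans)
  then show ?thesis
    by (simp only: a_inst_subst)
qed

theorem lemma7:
  fixes ar :: "'f \<Rightarrow> nat" and E :: "('f trm \<times> 'f trm) set" and t s :: "'f trm"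
  assumes "\<forall>(l, r)\<in>E. wf_trm ar l \<and> wf_trm ar r"
    and "wf_trm ar t" and "wf_trm ar s"
    and "derivable ar E t s"
  shows "derivable (ar_s ar) (E_s ar E) (a_inst t) (a_inst s)"
  using assms(4)
proof (induction rule: derivable.induct)
  case (ax s t)
  then show ?case by (auto intro: derivable.ax simp: E_s_def)
next
  case (refl t)
  then show ?case by (intro derivable.refl wf_trm_a_inst)
next
  case (sym s t)
  then show ?case by (blast intro: derivable.sym)
next
  case (trans s t u)
  then show ?case by (blast intro: derivable.trans)
next
  case (cong ss f ts)
  then show ?case
    by (auto intro!: derivable.cong simp: list_all2_map1 list_all2_map2 elim: list_all2_mono)
next
  case (inst s t \<sigma>)
  then show ?case
    using derivable_wf_trm[OF assms(1)] by (auto intro: derivable_a_inst_subst)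
qed

end
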